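(* Let $C_n$ be the number of cycles of a permutation chosen uniformly at random from the permutations of $[2n]$ with all cycle lengths even. Then, as $n\to\infty$, $C_n$ is asymptotically normally distributed, with \[ \mathbb{E}(C_n)=\frac12\log n+\left(\frac12\gamma+\log2\right)+O(n^{-1}) \] and \[ \mathbb{V}(C_n)=\frac12\log n+\left(\frac12\gamma+\log2-\frac{\pi^2}{8}\right)+O(n^{-1}). \]
   Context: $\gamma$ denotes the Euler–Mascheroni constant. Asymptotic normality means $(C_n-\mathbb{E}C_n)/\sqrt{\mathbb{V}C_n}$ converges in distribution to a standard normal. *)

theory Defs
  imports "HOL-Probability.Probability" "HOL-Combinatorics.Orbits" "HOL-Library.Landau_Symbols"
begin

definition even_cycle_perms :: "nat \<Rightarrow> (nat \<Rightarrow> nat) set" where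
  "even_cycle_perms n = {p. p permutes {..<2*n} \<and> (\<forall>x<2*n. even (card (orbit p x)))}"

text \<open>Number of cycles of a permutation of {0..<2n} (fixed points count as cycles).\<close>
definition num_cycles :: "nat \<Rightarrow> (nat \<Rightarrow> nat) \<Rightarrow> nat" where
  "num_cycles n p = card ((\<lambda>x. orbit p x) ` {..<2*n})"

definition C_dist :: "nat \<Rightarrow> real pmf" where
  "C_dist n = map_pmf (\<lambda>p. real (num_cycles n p)) (pmf_of_set (even_cycle_perms n))"

definition C_mean :: "nat \<Rightarrow> real" where
  "C_mean n = measure_pmf.expectation (C_dist n) (\<lambda>x. x)"

definition C_var :: "nat \<Rightarrow> real" where
  "C_var n = measure_pmf.variance (C_dist n) (\<lambda>x. x)"

end

theory Submission
  imports Defs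
begin

text \<open>
  Fix a point a of a 2(m+1)-element set S and its image b = p a, which differs from a because p has
  no cycle of length 1. Either (a b) is a 2-cycle of p, and removing it leaves an even-cycle
  permutation of the remaining 2m points with one cycle fewer; or a and b are consecutive inside a
  longer cycle, and cutting them out leaves an even-cycle permutation with the same number of cycles
  together with the predecessor d of a. So the number c(m, k) of even-cycle permutations of a
  2m-set with k cycles satisfies c(m+1, k) = (2m+1) (c(m, k-1) + 2m c(m, k)), i.e. the number of
  cycles C_n is distributed as a sum of independent Bernoulli variables with parameters 1/(2j+1),
  j < n. Its mean is H_2n - H_n/2 and its variance is the mean minus a partial sum of
  the series of 1/(2j+1)^2 = pi^2/8, whence the expansions. Finally, a third-order Taylor bound shows
  that the characteristic function of the standardised Bernoulli sum is within O(1/sigma) of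
  exp(-t^2/2), and Levy's continuity theorem gives asymptotic normality.
\<close>

section \<open>Counting even-cycle permutations by their number of cycles\<close>

lemma orbit_eq_if_mem_orbit:
  assumes "permutation f" "y \<in> orbit f x"
  shows "orbit f y = orbit f x"
  by (metis assms cyclic_on_orbit' orbit_cyclic_eq3)

lemma orbit_subset_if_closed:
  assumes "f x \<in> A" "\<And>y. y \<in> A \<Longrightarrow> f y \<in> A"
  shows "orbit f x \<subseteq> A"
proof
  fix y assume "y \<in> orbit f x"
  then show "y \<in> A" by induct (use assms in auto)
qed

definition even_cycle_perms_on :: "'a set \<Rightarrow> ('a \<Rightarrow> 'a) set" where
  "even_cycle_perms_on S = {p. p permutes S \<and> (\<forall>x\<in>S. even (card (orbit p x)))}"

definition num_cycles_on :: "'a set \<Rightarrow> ('a \<Rightarrow> 'a) \<Rightarrow> nat" where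
  "num_cycles_on S p = card ((\<lambda>x. orbit p x) ` S)"

text \<open>The cycle of r through d, d \<mapsto> r d, becomes d \<mapsto> a \<mapsto> b \<mapsto> r d.\<close>
definition splice_after :: "('a \<Rightarrow> 'a) \<Rightarrow> 'a \<Rightarrow> 'a \<Rightarrow> 'a \<Rightarrow> 'a \<Rightarrow> 'a" where
  "splice_after r d a b = r \<circ> Transposition.transpose d a \<circ> Transposition.transpose a b"

context
  fixes r :: "'a \<Rightarrow> 'a" and T :: "'a set" and a b :: 'a
  assumes perm: "r permutes T" and fin: "finite T"
    and fresh: "a \<notin> T" "b \<notin> T" "a \<noteq> b"
begin

private lemma permutation_r: "permutation r"
  using perm fin permutation_permutes by blast

private lemma orbit_r_subset: "x \<in> T \<Longrightarrow> orbit r x \<subseteq> T"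
  by (rule permutes_orbit_subset[OF perm])

lemma splice_after_apply:
  assumes "d \<in> T"
  shows "splice_after r d a b d = a" "splice_after r d a b a = b" "splice_after r d a b b = r d"
    and "x \<in> T - {d} \<Longrightarrow> splice_after r d a b x = r x"
proof -
  have "r a = a" "r b = b" "d \<noteq> a" "d \<noteq> b"
    using assms fresh permutes_not_in[OF perm] by auto
  then show "splice_after r d a b d = a" "splice_after r d a b a = b" "splice_after r d a b b = r d"
    using fresh by (auto simp: splice_after_def transpose_def)
  assume "x \<in> T - {d}"
  then have "x \<noteq> a" "x \<noteq> b" "x \<noteq> d" using fresh by auto
  then show "splice_after r d a b x = r x" by (simp add: splice_after_def transpose_def)
qed

lemma permutes_splice_after:
  assumes "d \<in> T"
  shows "splice_after r d a b permutes insert a (insert b T)"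
proof -
  have "r permutes insert a (insert b T)" by (rule permutes_subset[OF perm]) auto
  then show ?thesis unfolding splice_after_def using assms
    by (intro permutes_compose permutes_swap_id) auto
qed

lemma orbit_splice_after:
  assumes d: "d \<in> T"
  shows "orbit (splice_after r d a b) d = insert a (insert b (orbit r d))"
proof
  let ?q = "splice_after r d a b"
  note q = splice_after_apply[OF d]
  show "orbit ?q d \<subseteq> insert a (insert b (orbit r d))"
  proof (rule orbit_subset_if_closed)
    fix y assume y: "y \<in> insert a (insert b (orbit r d))"
    show "?q y \<in> insert a (insert b (orbit r d))"
    proof (cases "y \<in> {a, b, d}")
      case True then show ?thesis using q by (auto intro: orbit.base)
    next
      case False
      then have "y \<in> orbit r d" using y by auto
      moreover have "y \<in> T - {d}" using calculation False orbit_r_subset[OF d] by auto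
      ultimately show ?thesis using q(4) by (auto intro: orbit.step)
    qed
  qed (simp add: q)
  have a_in: "a \<in> orbit ?q d" by (rule orbit_eqI(1)) (simp add: q)
  have b_in: "b \<in> orbit ?q d" by (rule orbit_eqI(2)[OF _ a_in]) (simp add: q)
  have rd: "r d \<in> orbit ?q d" by (rule orbit_eqI(2)[OF _ b_in]) (simp add: q)
  have "z \<in> orbit ?q d" if "z \<in> orbit r d" for z
    using that
  proof induct
    case (step z)
    have "z \<in> T" using step(1) orbit_r_subset d by blast
    show ?case
    proof (cases "z = d")
      case False
      then have "?q z = r z" using \<open>z \<in> T\<close> q(4) by simp
      then show ?thesis using orbit_eqI(2)[OF _ step(2)] by simp
    qed (use rd in simp)
  qed (rule rd)
  then show "insert a (insert b (orbit r d)) \<subseteq> orbit ?q d"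
    using a_in b_in by blast
qed

lemma permutation_splice_after:
  assumes "d \<in> T"
  shows "permutation (splice_after r d a b)"
  unfolding permutation_permutes
  by (intro exI[of _ "insert a (insert b T)"]) (simp add: fin permutes_splice_after[OF assms])

lemma orbit_splice_after_new:
  assumes d: "d \<in> T" and x: "x \<in> {a, b}"
  shows "orbit (splice_after r d a b) x = insert a (insert b (orbit r d))"
proof -
  have "x \<in> orbit (splice_after r d a b) d" using orbit_splice_after[OF d] x by auto
  from orbit_eq_if_mem_orbit[OF permutation_splice_after[OF d] this] show ?thesis
    using orbit_splice_after[OF d] by simp
qed

lemma orbit_splice_after_old:
  assumes d: "d \<in> T" and x: "x \<in> T"
  shows "orbit (splice_after r d a b) x
           = (if d \<in> orbit r x then insert a (insert b (orbit r x)) else orbit r x)"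
proof (cases "d \<in> orbit r x")
  case True
  have "orbit r x = orbit r d" using orbit_eq_if_mem_orbit[OF permutation_r True] by simp
  moreover have "x \<in> orbit (splice_after r d a b) d"
    using calculation permutation_self_in_orbit[OF permutation_r] orbit_splice_after[OF d] by blast
  from orbit_eq_if_mem_orbit[OF permutation_splice_after[OF d] this] show ?thesis
    using True calculation orbit_splice_after[OF d] by simp
next
  case False
  have "orbit r x = orbit (splice_after r d a b) x"
  proof (rule orbit_cong0[OF permutation_self_in_orbit[OF permutation_r]])
    show "r \<in> orbit r x \<rightarrow> orbit r x" by (auto intro: orbit.step)
    fix y assume "y \<in> orbit r x"
    then have "y \<in> T" "y \<noteq> d" using orbit_r_subset x False by auto
    then show "r y = splice_after r d a b y" using splice_after_apply(4)[OF d] by simp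
  qed
  then show ?thesis using False by simp
qed

private lemma card_insert_insert_orbit:
  assumes "x \<in> T"
  shows "card (insert a (insert b (orbit r x))) = card (orbit r x) + 2"
proof -
  have "a \<notin> orbit r x" "b \<notin> orbit r x" using orbit_r_subset[OF assms] fresh by auto
  then show ?thesis using finite_subset[OF orbit_r_subset[OF assms] fin] fresh by simp
qed

lemma splice_after_in_even_cycle_perms_on_iff:
  assumes d: "d \<in> T"
  shows "splice_after r d a b \<in> even_cycle_perms_on (insert a (insert b T))
           \<longleftrightarrow> r \<in> even_cycle_perms_on T"
proof -
  let ?q = "splice_after r d a b"
  have "(\<forall>x\<in>insert a (insert b T). even (card (orbit ?q x)))
          \<longleftrightarrow> (\<forall>x\<in>T. even (card (orbit r x)))"
    using orbit_splice_after_new[OF d] orbit_splice_after_old[OF d] card_insert_insert_orbit d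
    by (auto split: if_splits)
  then show ?thesis
    unfolding even_cycle_perms_on_def using permutes_splice_after[OF d] perm by simp
qed

lemma num_cycles_on_splice_after:
  assumes d: "d \<in> T"
  shows "num_cycles_on (insert a (insert b T)) (splice_after r d a b) = num_cycles_on T r"
proof -
  define F where "F X = (if d \<in> X then insert a (insert b X) else X)" for X
  have "d \<in> orbit r d" by (rule permutation_self_in_orbit[OF permutation_r])
  then have "(\<lambda>x. orbit (splice_after r d a b) x) ` insert a (insert b T)
               = F ` (\<lambda>x. orbit r x) ` T"
    using orbit_splice_after_new[OF d] orbit_splice_after_old[OF d] d
    by (auto simp: F_def image_iff)
  moreover have "inj_on F ((\<lambda>x. orbit r x) ` T)"
  proof (rule inj_onI)
    fix X Y assume XY: "X \<in> (\<lambda>x. orbit r x) ` T" "Y \<in> (\<lambda>x. orbit r x) ` T" "F X = F Y"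
    then have "X \<subseteq> T" "Y \<subseteq> T" using orbit_r_subset by auto
    then have "X = F X - {a, b}" "Y = F Y - {a, b}" using fresh by (auto simp: F_def)
    then show "X = Y" using XY(3) by simp
  qed
  ultimately show ?thesis
    unfolding num_cycles_on_def by (simp add: card_image)
qed

lemma transpose_comp_apply:
  "Transposition.transpose a b (r a) = b" "Transposition.transpose a b (r b) = a"
  "x \<in> T \<Longrightarrow> Transposition.transpose a b (r x) = r x"
proof -
  have "r a = a" "r b = b" using fresh permutes_not_in[OF perm] by auto
  then show "Transposition.transpose a b (r a) = b" "Transposition.transpose a b (r b) = a"
    by simp_all
  assume "x \<in> T"
  then have "r x \<noteq> a" "r x \<noteq> b" using permutes_in_image[OF perm] fresh by auto
  then show "Transposition.transpose a b (r x) = r x" by simp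
qed

lemma permutes_transpose_comp: "Transposition.transpose a b \<circ> r permutes insert a (insert b T)"
proof -
  have "r permutes insert a (insert b T)" by (rule permutes_subset[OF perm]) auto
  then show ?thesis by (intro permutes_compose permutes_swap_id) auto
qed

lemma orbit_transpose_comp_new:
  assumes "x \<in> {a, b}"
  shows "orbit (Transposition.transpose a b \<circ> r) x = {a, b}"
proof -
  let ?q = "Transposition.transpose a b \<circ> r"
  have "orbit ?q a = {a, b}"
  proof
    show "orbit ?q a \<subseteq> {a, b}"
      by (rule orbit_subset_if_closed) (auto simp: transpose_comp_apply)
    have "b \<in> orbit ?q a" by (rule orbit_eqI(1)) (simp add: transpose_comp_apply)
    moreover have "a \<in> orbit ?q a"
      by (rule orbit_eqI(2)[OF _ calculation]) (simp add: transpose_comp_apply)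
    ultimately show "{a, b} \<subseteq> orbit ?q a" by blast
  qed
  moreover have "permutation ?q"
    unfolding permutation_permutes
    by (intro exI[of _ "insert a (insert b T)"]) (simp add: fin permutes_transpose_comp)
  ultimately show ?thesis using assms orbit_eq_if_mem_orbit[of ?q b a] by auto
qed

lemma orbit_transpose_comp_old:
  "x \<in> T \<Longrightarrow> orbit (Transposition.transpose a b \<circ> r) x = orbit r x"
  by (rule orbit_cong0) (auto simp: transpose_comp_apply permutes_in_image[OF perm])

lemma transpose_comp_in_even_cycle_perms_on_iff:
  "Transposition.transpose a b \<circ> r \<in> even_cycle_perms_on (insert a (insert b T))
     \<longleftrightarrow> r \<in> even_cycle_perms_on T"
  using perm permutes_transpose_comp orbit_transpose_comp_new orbit_transpose_comp_old fresh
  by (auto simp: even_cycle_perms_on_def)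

lemma num_cycles_on_transpose_comp:
  "num_cycles_on (insert a (insert b T)) (Transposition.transpose a b \<circ> r) = Suc (num_cycles_on T r)"
proof -
  have "(\<lambda>x. orbit (Transposition.transpose a b \<circ> r) x) ` insert a (insert b T)
          = insert {a, b} ((\<lambda>x. orbit r x) ` T)"
    using orbit_transpose_comp_new orbit_transpose_comp_old by auto
  moreover have "{a, b} \<notin> (\<lambda>x. orbit r x) ` T"
    using orbit_r_subset fresh by blast
  ultimately show ?thesis
    unfolding num_cycles_on_def using fin by simp
qed

end

lemma permutes_insert_insert_fixed:
  assumes "p permutes insert a (insert b T)" "p a = a" "p b = b"
  shows "p permutes T"
  by (rule permutes_superset[OF assms(1)]) (use assms(2,3) in auto)

lemma card_even_cycle_perms_on_two_cycle:
  assumes fin: "finite T" and fresh: "a \<notin> T" "b \<notin> T" "a \<noteq> b"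
  defines "S \<equiv> insert a (insert b T)"
  shows "card {p \<in> even_cycle_perms_on S. num_cycles_on S p = k \<and> p a = b \<and> p b = a}
           = card {r \<in> even_cycle_perms_on T. Suc (num_cycles_on T r) = k}"
proof -
  let ?\<tau> = "Transposition.transpose a b"
  have eq: "{p \<in> even_cycle_perms_on S. num_cycles_on S p = k \<and> p a = b \<and> p b = a}
          = (\<lambda>r. ?\<tau> \<circ> r) ` {r \<in> even_cycle_perms_on T. Suc (num_cycles_on T r) = k}"
  proof (intro equalityI subsetI)
    fix p assume "p \<in> {p \<in> even_cycle_perms_on S. num_cycles_on S p = k \<and> p a = b \<and> p b = a}"
    then have p: "p \<in> even_cycle_perms_on S" "num_cycles_on S p = k" "p a = b" "p b = a" by auto
    have "?\<tau> \<circ> p permutes S"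
      using p(1) by (intro permutes_compose permutes_swap_id) (auto simp: even_cycle_perms_on_def S_def)
    then have r: "?\<tau> \<circ> p permutes T"
      unfolding S_def by (rule permutes_insert_insert_fixed) (simp_all add: p(3,4))
    have "p = ?\<tau> \<circ> (?\<tau> \<circ> p)" by (simp add: o_assoc)
    then show "p \<in> (\<lambda>r. ?\<tau> \<circ> r) ` {r \<in> even_cycle_perms_on T. Suc (num_cycles_on T r) = k}"
      using p transpose_comp_in_even_cycle_perms_on_iff[OF r fin fresh]
        num_cycles_on_transpose_comp[OF r fin fresh]
      by (auto simp: S_def intro!: image_eqI[of _ _ "?\<tau> \<circ> p"])
  next
    fix p assume "p \<in> (\<lambda>r. ?\<tau> \<circ> r) ` {r \<in> even_cycle_perms_on T. Suc (num_cycles_on T r) = k}"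
    then obtain r where r: "r \<in> even_cycle_perms_on T" "Suc (num_cycles_on T r) = k" and p: "p = ?\<tau> \<circ> r"
      by blast
    have perm: "r permutes T" using r(1) by (simp add: even_cycle_perms_on_def)
    show "p \<in> {p \<in> even_cycle_perms_on S. num_cycles_on S p = k \<and> p a = b \<and> p b = a}"
      using r p transpose_comp_in_even_cycle_perms_on_iff[OF perm fin fresh]
        num_cycles_on_transpose_comp[OF perm fin fresh] transpose_comp_apply[OF perm fin fresh]
      by (simp add: S_def)
  qed
  have "inj_on (\<lambda>r. ?\<tau> \<circ> r) X" for X
    by (rule inj_onI) (metis comp_assoc id_comp transpose_comp_involutory)
  then show ?thesis unfolding eq by (rule card_image)
qed

lemma splice_after_unsplice:
  "splice_after (p \<circ> Transposition.transpose a b \<circ> Transposition.transpose d a) d a b = p"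
  "splice_after r d a b \<circ> Transposition.transpose a b \<circ> Transposition.transpose d a = r"
  by (simp_all add: splice_after_def comp_assoc)

lemma inj_on_splice_after:
  assumes fin: "finite T" and fresh: "a \<notin> T" "b \<notin> T" "a \<noteq> b"
  shows "inj_on (\<lambda>(r, d). splice_after r d a b) ({r. r permutes T} \<times> T)"
proof (rule inj_onI)
  fix x y
  assume xy: "x \<in> {r. r permutes T} \<times> T" "y \<in> {r. r permutes T} \<times> T"
    and eq: "(\<lambda>(r, d). splice_after r d a b) x = (\<lambda>(r, d). splice_after r d a b) y"
  obtain r d r' d' where x: "x = (r, d)" and y: "y = (r', d')" by fastforce
  have r: "r permutes T" "d \<in> T" and r': "r' permutes T" "d' \<in> T" using xy by (simp_all add: x y)
  have eq: "splice_after r d a b = splice_after r' d' a b" using eq by (simp add: x y)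
  have "splice_after r d a b d = splice_after r d a b d'"
    using splice_after_apply(1)[OF r(1) fin fresh r(2)] splice_after_apply(1)[OF r'(1) fin fresh r'(2)] eq
    by simp
  with permutes_inj[OF permutes_splice_after[OF r(1) fin fresh r(2)]] have "d = d'" by (rule injD)
  then show "x = y" using eq splice_after_unsplice(2) x y by metis
qed

lemma even_cycle_perms_on_spliced_eq_image:
  assumes fin: "finite T" and fresh: "a \<notin> T" "b \<notin> T" "a \<noteq> b"
  defines "S \<equiv> insert a (insert b T)"
  shows "{p \<in> even_cycle_perms_on S. num_cycles_on S p = k \<and> p a = b \<and> p b \<noteq> a}
           = (\<lambda>(r, d). splice_after r d a b) ` ({r \<in> even_cycle_perms_on T. num_cycles_on T r = k} \<times> T)"
    (is "?P = ?splice ` (?A \<times> T)")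
proof (intro equalityI subsetI)
  fix p assume "p \<in> ?P"
  then have p: "p \<in> even_cycle_perms_on S" "num_cycles_on S p = k" "p a = b" "p b \<noteq> a" by auto
  then have pS: "p permutes S" by (simp add: even_cycle_perms_on_def)
  define d where "d = inv p a"
  have pd: "p d = a" unfolding d_def using permutes_inverses(1)[OF pS] by simp
  have "d \<in> S" unfolding d_def using permutes_in_image[OF permutes_inv[OF pS]] by (simp add: S_def)
  moreover have "d \<noteq> a" "d \<noteq> b" using pd p(3,4) fresh(3) by auto
  ultimately have d: "d \<in> T" by (simp add: S_def)
  define r where "r = p \<circ> Transposition.transpose a b \<circ> Transposition.transpose d a"
  have "r permutes S" unfolding r_def using pS d
    by (intro permutes_compose permutes_swap_id) (auto simp: S_def)
  moreover have "r a = a" "r b = b"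
    using pd p(3) \<open>d \<noteq> a\<close> \<open>d \<noteq> b\<close> fresh(3) by (auto simp: r_def transpose_def)
  ultimately have r: "r permutes T" unfolding S_def by (rule permutes_insert_insert_fixed)
  have pr: "p = splice_after r d a b" unfolding r_def by (simp add: splice_after_unsplice)
  show "p \<in> ?splice ` (?A \<times> T)"
    using p splice_after_in_even_cycle_perms_on_iff[OF r fin fresh d]
      num_cycles_on_splice_after[OF r fin fresh d] d
    by (auto simp: pr S_def intro!: image_eqI[of _ _ "(r, d)"])
next
  fix p assume "p \<in> ?splice ` (?A \<times> T)"
  then obtain r d where r: "r \<in> ?A" and d: "d \<in> T" and p: "p = splice_after r d a b" by auto
  have perm: "r permutes T" using r by (simp add: even_cycle_perms_on_def)
  have "r d \<noteq> a" using permutes_in_image[OF perm] d fresh by auto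
  then show "p \<in> ?P"
    using r p splice_after_apply[OF perm fin fresh d] splice_after_in_even_cycle_perms_on_iff[OF perm fin fresh d]
      num_cycles_on_splice_after[OF perm fin fresh d]
    by (simp add: S_def)
qed

lemma card_even_cycle_perms_on_spliced:
  assumes fin: "finite T" and fresh: "a \<notin> T" "b \<notin> T" "a \<noteq> b"
  defines "S \<equiv> insert a (insert b T)"
  shows "card {p \<in> even_cycle_perms_on S. num_cycles_on S p = k \<and> p a = b \<and> p b \<noteq> a}
           = card {r \<in> even_cycle_perms_on T. num_cycles_on T r = k} * card T"
proof -
  have "inj_on (\<lambda>(r, d). splice_after r d a b) ({r \<in> even_cycle_perms_on T. num_cycles_on T r = k} \<times> T)"
    by (rule inj_on_subset[OF inj_on_splice_after[OF fin fresh]]) (auto simp: even_cycle_perms_on_def)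
  then show ?thesis
    unfolding S_def even_cycle_perms_on_spliced_eq_image[OF fin fresh]
    by (simp add: card_image card_cartesian_product)
qed

lemma card_even_cycle_perms_on_image_fixed:
  assumes fin: "finite T" and fresh: "a \<notin> T" "b \<notin> T" "a \<noteq> b"
  defines "S \<equiv> insert a (insert b T)"
  shows "card {p \<in> even_cycle_perms_on S. num_cycles_on S p = k \<and> p a = b}
           = card {r \<in> even_cycle_perms_on T. Suc (num_cycles_on T r) = k}
             + card {r \<in> even_cycle_perms_on T. num_cycles_on T r = k} * card T"
proof -
  have "finite {p. p permutes S}" by (rule finite_permutations) (simp add: S_def fin)
  then have fin_fibers: "finite {p \<in> even_cycle_perms_on S. P p}" for P
    by (rule rev_finite_subset) (auto simp: even_cycle_perms_on_def)
  have "card {p \<in> even_cycle_perms_on S. num_cycles_on S p = k \<and> p a = b}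
          = card ({p \<in> even_cycle_perms_on S. num_cycles_on S p = k \<and> p a = b \<and> p b = a}
            \<union> {p \<in> even_cycle_perms_on S. num_cycles_on S p = k \<and> p a = b \<and> p b \<noteq> a})"
    by (rule arg_cong[where f = card]) blast
  also have "\<dots> = card {p \<in> even_cycle_perms_on S. num_cycles_on S p = k \<and> p a = b \<and> p b = a}
      + card {p \<in> even_cycle_perms_on S. num_cycles_on S p = k \<and> p a = b \<and> p b \<noteq> a}"
    by (rule card_Un_disjoint[OF fin_fibers fin_fibers]) blast
  finally show ?thesis
    using card_even_cycle_perms_on_two_cycle[OF fin fresh] card_even_cycle_perms_on_spliced[OF fin fresh]
    by (simp add: S_def)
qed

lemma even_cycle_perm_no_fixed_point:
  assumes "p \<in> even_cycle_perms_on S" "x \<in> S"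
  shows "p x \<noteq> x"
proof
  assume "p x = x"
  then have "orbit p x = {x}" by (simp add: orbit_eq_singleton_iff)
  then show False using assms by (auto simp: even_cycle_perms_on_def)
qed

fun even_cycle_count :: "nat \<Rightarrow> nat \<Rightarrow> nat" where
  "even_cycle_count 0 k = (if k = 0 then 1 else 0)"
| "even_cycle_count (Suc m) k =
     (2*m + 1) * ((case k of 0 \<Rightarrow> 0 | Suc j \<Rightarrow> even_cycle_count m j) + 2*m * even_cycle_count m k)"

theorem card_even_cycle_perms_on_num_cycles:
  assumes "finite S" "card S = 2*m"
  shows "card {p \<in> even_cycle_perms_on S. num_cycles_on S p = k} = even_cycle_count m k"
  using assms
proof (induction m arbitrary: S k)
  case 0
  then have "S = {}" by simp
  moreover have "even_cycle_perms_on S = {id}"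
    unfolding \<open>S = {}\<close> by (auto simp: even_cycle_perms_on_def)
  ultimately show ?case unfolding num_cycles_on_def by simp
next
  case (Suc m)
  then have "S \<noteq> {}" by auto
  then obtain a where a: "a \<in> S" by blast
  let ?fiber = "\<lambda>b. {p \<in> even_cycle_perms_on S. num_cycles_on S p = k \<and> p a = b}"
  have "p a \<in> S - {a}" if "p \<in> even_cycle_perms_on S" for p
    using that a even_cycle_perm_no_fixed_point[OF that a] permutes_in_image[of p S a]
    by (auto simp: even_cycle_perms_on_def)
  then have fibers: "{p \<in> even_cycle_perms_on S. num_cycles_on S p = k} = (\<Union>b\<in>S - {a}. ?fiber b)"
    by blast
  have card_fiber: "card (?fiber b) = (case k of 0 \<Rightarrow> 0 | Suc j \<Rightarrow> even_cycle_count m j)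
                                       + even_cycle_count m k * (2*m)" if b: "b \<in> S - {a}" for b
  proof -
    define T where "T = S - {a, b}"
    have S: "S = insert a (insert b T)" and fresh: "a \<notin> T" "b \<notin> T" "a \<noteq> b"
      using a b by (auto simp: T_def)
    have "finite T" using Suc.prems(1) by (simp add: T_def)
    moreover have "card T = 2*m" using Suc.prems(2) calculation fresh by (simp add: S)
    note IH = Suc.IH[OF calculation]
    show ?thesis
      using card_even_cycle_perms_on_image_fixed[OF \<open>finite T\<close> fresh, of k] IH \<open>card T = 2*m\<close>
      by (cases k) (simp_all add: S)
  qed
  have "finite {p. p permutes S}" using Suc.prems(1) by (rule finite_permutations)
  then have "finite (?fiber b)" for b
    by (rule rev_finite_subset) (auto simp: even_cycle_perms_on_def)
  then have "card {p \<in> even_cycle_perms_on S. num_cycles_on S p = k} = (\<Sum>b\<in>S - {a}. card (?fiber b))"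
    unfolding fibers using Suc.prems(1) by (intro card_UN_disjoint) auto
  also have "\<dots> = even_cycle_count (Suc m) k"
    using Suc.prems a by (simp add: card_fiber algebra_simps)
  finally show ?case .
qed

section \<open>Poisson binomial distributions\<close>

text \<open>pb_weight p n k is the probability that the sum of independent Bernoulli variables with
  parameters p j, j < n, equals k.\<close>
fun pb_weight :: "(nat \<Rightarrow> real) \<Rightarrow> nat \<Rightarrow> nat \<Rightarrow> real" where
  "pb_weight p 0 k = (if k = 0 then 1 else 0)"
| "pb_weight p (Suc n) k =
     p n * (case k of 0 \<Rightarrow> 0 | Suc j \<Rightarrow> pb_weight p n j) + (1 - p n) * pb_weight p n k"

lemma pb_weight_eq_0: "n < k \<Longrightarrow> pb_weight p n k = 0"
proof (induction n arbitrary: k)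
  case (Suc n)
  then show ?case by (cases k) auto
qed simp

lemma sum_pb_weight:
  assumes "n \<le> m"
  shows "(\<Sum>k\<le>m. pb_weight p n k) = 1"
  using assms
proof (induction n arbitrary: m)
  case 0
  then show ?case by (simp add: sum.atMost_shift)
next
  case (Suc n)
  then obtain m' where m: "m = Suc m'" "n \<le> m'" by (cases m) auto
  have "(\<Sum>k\<le>m. (case k of 0 \<Rightarrow> 0 | Suc j \<Rightarrow> pb_weight p n j)) = (\<Sum>k\<le>m'. pb_weight p n k)"
    unfolding m(1) by (subst sum.atMost_Suc_shift) simp
  moreover have "(\<Sum>k\<le>m. pb_weight p n k) = 1" by (rule Suc.IH) (use m in simp)
  ultimately show ?case
    using Suc.IH[OF m(2)] by (simp add: sum.distrib sum_distrib_left[symmetric])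
qed

definition pb_expectation :: "(nat \<Rightarrow> real) \<Rightarrow> nat \<Rightarrow> (nat \<Rightarrow> 'b::real_vector) \<Rightarrow> 'b" where
  "pb_expectation p n g = (\<Sum>k\<le>n. pb_weight p n k *\<^sub>R g k)"

lemma pb_expectation_Suc:
  "pb_expectation p (Suc n) g
     = p n *\<^sub>R pb_expectation p n (\<lambda>k. g (Suc k)) + (1 - p n) *\<^sub>R pb_expectation p n g"
proof -
  have "pb_expectation p (Suc n) g
          = (\<Sum>k\<le>Suc n. (p n * (case k of 0 \<Rightarrow> 0 | Suc j \<Rightarrow> pb_weight p n j)) *\<^sub>R g k)
            + (\<Sum>k\<le>Suc n. ((1 - p n) * pb_weight p n k) *\<^sub>R g k)"
    unfolding pb_expectation_def pb_weight.simps scaleR_add_left sum.distrib ..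
  also have "(\<Sum>k\<le>Suc n. (p n * (case k of 0 \<Rightarrow> 0 | Suc j \<Rightarrow> pb_weight p n j)) *\<^sub>R g k)
               = p n *\<^sub>R pb_expectation p n (\<lambda>k. g (Suc k))"
    by (subst sum.atMost_Suc_shift) (simp add: pb_expectation_def scaleR_sum_right)
  also have "(\<Sum>k\<le>Suc n. ((1 - p n) * pb_weight p n k) *\<^sub>R g k) = (1 - p n) *\<^sub>R pb_expectation p n g"
    by (simp add: pb_expectation_def scaleR_sum_right pb_weight_eq_0)
  finally show ?thesis .
qed

lemma pb_expectation_add: "pb_expectation p n (\<lambda>k. f k + g k) = pb_expectation p n f + pb_expectation p n g"
  by (simp add: pb_expectation_def scaleR_add_right sum.distrib)

lemma pb_expectation_mult_left:
  fixes c :: "'b::real_algebra"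
  shows "pb_expectation p n (\<lambda>k. c * g k) = c * pb_expectation p n g"
  by (simp add: pb_expectation_def sum_distrib_left)

lemma pb_expectation_const: "pb_expectation p n (\<lambda>k. c) = c"
  using sum_pb_weight[of n n p] by (simp add: pb_expectation_def scaleR_sum_left[symmetric])

lemma pb_expectation_id: "pb_expectation p n real = (\<Sum>j<n. p j)"
proof (induction n)
  case (Suc n)
  have "pb_expectation p n (\<lambda>k. real (Suc k)) = pb_expectation p n real + 1"
    by (simp add: pb_expectation_add pb_expectation_const)
  then show ?case by (simp add: pb_expectation_Suc Suc.IH algebra_simps)
qed (simp add: pb_expectation_def)

lemma pb_expectation_square:
  "pb_expectation p n (\<lambda>k. (real k)\<^sup>2) = (\<Sum>j<n. p j * (1 - p j)) + (\<Sum>j<n. p j)\<^sup>2"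
proof (induction n)
  case (Suc n)
  have "(\<lambda>k. (real (Suc k))\<^sup>2) = (\<lambda>k. (real k)\<^sup>2 + (2 * real k + 1))"
    by (simp add: power2_eq_square algebra_simps)
  then have "pb_expectation p n (\<lambda>k. (real (Suc k))\<^sup>2)
               = pb_expectation p n (\<lambda>k. (real k)\<^sup>2) + (2 * pb_expectation p n real + 1)"
    by (simp only: pb_expectation_add pb_expectation_mult_left pb_expectation_const)
  then show ?case
    unfolding pb_expectation_Suc Suc.IH pb_expectation_id real_scaleR_def sum.lessThan_Suc
    by (simp add: algebra_simps power2_eq_square)
qed (simp add: pb_expectation_def)

lemma pb_expectation_variance:
  "pb_expectation p n (\<lambda>k. (real k - (\<Sum>j<n. p j))\<^sup>2) = (\<Sum>j<n. p j * (1 - p j))"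
proof -
  let ?\<mu> = "\<Sum>j<n. p j"
  have "(\<lambda>k. (real k - ?\<mu>)\<^sup>2) = (\<lambda>k. (real k)\<^sup>2 + ((- 2 * ?\<mu>) * real k + ?\<mu>\<^sup>2))"
    by (simp add: power2_eq_square algebra_simps)
  then have "pb_expectation p n (\<lambda>k. (real k - ?\<mu>)\<^sup>2)
               = pb_expectation p n (\<lambda>k. (real k)\<^sup>2) + ((- 2 * ?\<mu>) * pb_expectation p n real + ?\<mu>\<^sup>2)"
    by (simp only: pb_expectation_add pb_expectation_mult_left pb_expectation_const)
  also have "\<dots> = (\<Sum>j<n. p j * (1 - p j))"
    unfolding pb_expectation_square pb_expectation_id by (simp add: power2_eq_square)
  finally show ?thesis .
qed

lemma pb_expectation_iexp:
  "pb_expectation p n (\<lambda>k. iexp (s * real k))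
     = (\<Prod>j<n. 1 - complex_of_real (p j) + complex_of_real (p j) * iexp s)"
proof (induction n)
  case (Suc n)
  have "(\<lambda>k. iexp (s * real (Suc k))) = (\<lambda>k. iexp s * iexp (s * real k))"
    by (simp add: exp_add[symmetric] algebra_simps)
  then have "pb_expectation p n (\<lambda>k. iexp (s * real (Suc k)))
               = iexp s * pb_expectation p n (\<lambda>k. iexp (s * real k))"
    by (simp only: pb_expectation_mult_left)
  then show ?case
    unfolding pb_expectation_Suc Suc.IH prod.lessThan_Suc scaleR_conv_of_real
    by (simp add: algebra_simps)
qed (simp add: pb_expectation_def)

section \<open>The law of the number of cycles\<close>

definition inv_odd :: "nat \<Rightarrow> real" where
  "inv_odd j = 1 / (2 * real j + 1)"

lemma even_cycle_count_eq_pb_weight: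
  "real (even_cycle_count n k) = real (\<Prod>j<n. (2*j + 1)\<^sup>2) * pb_weight inv_odd n k"
proof (induction n arbitrary: k)
  case (Suc n)
  define P where "P = real (\<Prod>j<n. (2*j + 1)\<^sup>2)"
  define q where "q = 2 * real n + 1"
  have IH: "real (even_cycle_count n j) = P * pb_weight inv_odd n j" for j
    unfolding P_def by (rule Suc.IH)
  have P: "real (\<Prod>j<Suc n. (2*j + 1)\<^sup>2) = P * q\<^sup>2" by (simp add: P_def q_def)
  have q: "q \<noteq> 0" "inv_odd n = 1 / q" "1 - 1 / q = 2 * real n / q"
    by (simp_all add: q_def inv_odd_def field_simps)
  have "real (even_cycle_count (Suc n) k)
          = q * ((case k of 0 \<Rightarrow> 0 | Suc j \<Rightarrow> P * pb_weight inv_odd n j)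
                 + 2 * real n * (P * pb_weight inv_odd n k))"
    by (cases k) (simp_all add: IH q_def algebra_simps)
  also have "\<dots> = P * q\<^sup>2 * pb_weight inv_odd (Suc n) k"
    unfolding pb_weight.simps q(2) q(3) using q(1) by (cases k) (simp_all add: field_simps power2_eq_square)
  finally show ?case unfolding P .
qed simp

lemma card_even_cycle_perms_on:
  assumes S: "finite S" "card S = 2*m"
  shows "card (even_cycle_perms_on S) = (\<Prod>j<m. (2*j + 1)\<^sup>2)"
proof -
  let ?fiber = "\<lambda>k. {p \<in> even_cycle_perms_on S. num_cycles_on S p = k}"
  have "num_cycles_on S p \<le> 2*m" for p
    using card_image_le[OF S(1), of "\<lambda>x. orbit p x"] S(2) by (simp add: num_cycles_on_def)
  then have U: "even_cycle_perms_on S = (\<Union>k\<le>2*m. ?fiber k)" by auto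
  have "finite (?fiber k)" for k
    using finite_permutations[OF S(1)] by (rule rev_finite_subset) (auto simp: even_cycle_perms_on_def)
  then have "card (even_cycle_perms_on S) = (\<Sum>k\<le>2*m. card (?fiber k))"
    by (subst U, intro card_UN_disjoint) auto
  then have "real (card (even_cycle_perms_on S)) = (\<Sum>k\<le>2*m. real (even_cycle_count m k))"
    using card_even_cycle_perms_on_num_cycles[OF S] by simp
  also have "\<dots> = real (\<Prod>j<m. (2*j + 1)\<^sup>2)"
    by (simp only: even_cycle_count_eq_pb_weight sum_distrib_left[symmetric] sum_pb_weight)
  finally show ?thesis by (simp only: of_nat_eq_iff)
qed

lemma even_cycle_perms_eq: "even_cycle_perms n = even_cycle_perms_on {..<2*n}"
  by (auto simp: even_cycle_perms_def even_cycle_perms_on_def)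

lemma num_cycles_eq: "num_cycles n = num_cycles_on {..<2*n}"
  by (simp add: num_cycles_def num_cycles_on_def fun_eq_iff)

lemma pmf_num_cycles:
  "pmf (map_pmf (num_cycles n) (pmf_of_set (even_cycle_perms n))) k = pb_weight inv_odd n k"
proof -
  let ?E = "even_cycle_perms n"
  have fin: "finite ?E" and ne: "?E \<noteq> {}"
    using card_even_cycle_perms_on[of "{..<2*n}" n] by (auto simp: even_cycle_perms_eq intro: card_ge_0_finite)
  have "pmf (map_pmf (num_cycles n) (pmf_of_set ?E)) k = card (?E \<inter> num_cycles n -` {k}) / card ?E"
    by (simp add: pmf_map measure_pmf_of_set[OF ne fin])
  also have "?E \<inter> num_cycles n -` {k} = {p \<in> even_cycle_perms_on {..<2*n}. num_cycles_on {..<2*n} p = k}"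
    by (auto simp: even_cycle_perms_eq num_cycles_eq)
  finally have "pmf (map_pmf (num_cycles n) (pmf_of_set ?E)) k = real (even_cycle_count n k) / card ?E"
    by (simp add: card_even_cycle_perms_on_num_cycles)
  moreover have "card ?E = (\<Prod>j<n. (2*j + 1)\<^sup>2)"
    by (simp add: card_even_cycle_perms_on even_cycle_perms_eq)
  moreover have "(\<Prod>j<n. (2*j + 1)\<^sup>2) \<noteq> (0::nat)" by simp
  ultimately show ?thesis by (simp only: even_cycle_count_eq_pb_weight) simp
qed

lemma integral_C_dist:
  fixes f :: "real \<Rightarrow> 'b::{banach, second_countable_topology}"
  shows "integral\<^sup>L (measure_pmf (C_dist n)) f = pb_expectation inv_odd n (\<lambda>k. f (real k))"
proof -
  let ?Q = "map_pmf (num_cycles n) (pmf_of_set (even_cycle_perms n))"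
  have "integral\<^sup>L (measure_pmf (C_dist n)) f = integral\<^sup>L (measure_pmf ?Q) (\<lambda>k. f (real k))"
    by (simp add: C_dist_def map_pmf_comp)
  also have "\<dots> = (\<Sum>k\<le>n. pmf ?Q k *\<^sub>R f (real k))"
  proof (rule integral_measure_pmf)
    fix k assume "k \<in> set_pmf ?Q"
    then have "pb_weight inv_odd n k \<noteq> 0" unfolding set_pmf_iff pmf_num_cycles .
    then show "k \<in> {..n}" using pb_weight_eq_0[of n k] by force
  qed simp
  finally show ?thesis by (simp add: pb_expectation_def pmf_num_cycles)
qed

lemma C_mean_eq: "C_mean n = (\<Sum>j<n. inv_odd j)"
  unfolding C_mean_def integral_C_dist by (rule pb_expectation_id)

lemma C_var_eq: "C_var n = (\<Sum>j<n. inv_odd j * (1 - inv_odd j))"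
  unfolding C_var_def integral_C_dist C_mean_eq[unfolded C_mean_def integral_C_dist]
  by (rule pb_expectation_variance)

section \<open>Characteristic functions of centred Bernoulli sums\<close>

lemma norm_prod_diff_le_sum_norm_diff:
  fixes a b :: "'i \<Rightarrow> 'a::{real_normed_algebra_1, comm_ring_1}"
  assumes "finite A" "\<And>j. j \<in> A \<Longrightarrow> norm (a j) \<le> 1" "\<And>j. j \<in> A \<Longrightarrow> norm (b j) \<le> 1"
  shows "norm ((\<Prod>j\<in>A. a j) - (\<Prod>j\<in>A. b j)) \<le> (\<Sum>j\<in>A. norm (a j - b j))"
  using assms
proof (induction A rule: finite_induct)
  case (insert x F)
  let ?Pa = "\<Prod>j\<in>F. a j" and ?Pb = "\<Prod>j\<in>F. b j"
  have "norm ?Pb \<le> (\<Prod>j\<in>F. norm (b j))" by (rule norm_prod_le)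
  also have "\<dots> \<le> 1" by (rule prod_le_1) (use insert in auto)
  finally have Pb: "norm ?Pb \<le> 1" .
  have "(\<Prod>j\<in>insert x F. a j) - (\<Prod>j\<in>insert x F. b j) = a x * (?Pa - ?Pb) + (a x - b x) * ?Pb"
    using insert by (simp add: algebra_simps)
  then have "norm ((\<Prod>j\<in>insert x F. a j) - (\<Prod>j\<in>insert x F. b j))
               \<le> norm (a x) * norm (?Pa - ?Pb) + norm (a x - b x) * norm ?Pb"
    by (simp only:) (intro norm_triangle_le add_mono norm_mult_ineq)
  also have "\<dots> \<le> 1 * (\<Sum>j\<in>F. norm (a j - b j)) + norm (a x - b x) * 1"
    using insert Pb by (intro add_mono mult_mono) auto
  finally show ?case using insert by simp
qed simp

lemma norm_iexp_minus_taylor2_le: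
  "norm (iexp x - (1 + \<i> * complex_of_real x - complex_of_real (x\<^sup>2 / 2))) \<le> \<bar>x\<bar> ^ 3 / 6"
proof -
  have "(\<Sum>k\<le>2. (\<i> * complex_of_real x) ^ k / fact k) = 1 + \<i> * complex_of_real x - complex_of_real (x\<^sup>2 / 2)"
    by (simp add: numeral_2_eq_2 power2_eq_square field_simps)
  then show ?thesis using iexp_approx1[of x 2] by (simp add: numeral_3_eq_3)
qed

lemma abs_exp_neg_minus_linear_le:
  fixes x :: real
  assumes "x \<ge> 0"
  shows "\<bar>exp (- x) - (1 - x)\<bar> \<le> x\<^sup>2"
proof -
  have "exp (- x) = 1 / exp x" by (simp add: exp_minus inverse_eq_divide)
  also have "\<dots> \<le> 1 / (1 + x)"
    using exp_ge_add_one_self[of x] assms by (intro divide_left_mono) auto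
  also have "\<dots> = (1 - x) + x\<^sup>2 / (1 + x)"
    using assms by (simp add: field_simps power2_eq_square)
  also have "\<dots> \<le> (1 - x) + x\<^sup>2"
    using assms by (simp add: divide_le_eq mult_le_cancel_left1)
  finally show ?thesis using exp_ge_add_one_self[of "- x"] assms by simp
qed

definition centred_bernoulli_char :: "real \<Rightarrow> real \<Rightarrow> complex" where
  "centred_bernoulli_char p s = (1 - complex_of_real p + complex_of_real p * iexp s) * iexp (- s * p)"

lemma norm_centred_bernoulli_char_le:
  assumes "0 \<le> p" "p \<le> 1"
  shows "norm (centred_bernoulli_char p s) \<le> 1"
proof -
  have "norm (1 - complex_of_real p + complex_of_real p * iexp s)
          \<le> norm (complex_of_real (1 - p)) + norm (complex_of_real p * iexp s)"
    using norm_triangle_ineq[of "complex_of_real (1 - p)" "complex_of_real p * iexp s"] by simp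
  also have "norm (complex_of_real (1 - p)) = 1 - p" using assms by (simp only: norm_of_real)
  also have "norm (complex_of_real p * iexp s) = p" using assms by (simp add: norm_mult)
  finally show ?thesis by (simp add: centred_bernoulli_char_def norm_mult)
qed

lemma centred_bernoulli_char_taylor:
  defines "R x \<equiv> iexp x - (1 + \<i> * complex_of_real x - complex_of_real (x\<^sup>2 / 2))"
  shows "centred_bernoulli_char p s
           = complex_of_real (1 - s\<^sup>2 * (p * (1 - p)) / 2)
             + (complex_of_real (1 - p) * R (- s * p) + complex_of_real p * R (s * (1 - p)))"
proof -
  have "iexp s * iexp (- s * p) = iexp (s * (1 - p))" by (simp add: exp_add[symmetric] algebra_simps)
  then have eq: "centred_bernoulli_char p s
               = complex_of_real (1 - p) * iexp (- s * p) + complex_of_real p * iexp (s * (1 - p))"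
    unfolding centred_bernoulli_char_def by (simp add: algebra_simps)
  show ?thesis unfolding R_def eq by (simp add: field_simps power2_eq_square)
qed

lemma norm_centred_bernoulli_char_minus_gaussian_le:
  assumes p: "0 \<le> p" "p \<le> 1"
  defines "v \<equiv> p * (1 - p)"
  shows "norm (centred_bernoulli_char p s - complex_of_real (exp (- (s\<^sup>2 * v) / 2)))
           \<le> v * (\<bar>s\<bar> ^ 3 / 6 + s ^ 4 / 4)"
proof -
  define R where "R x = iexp x - (1 + \<i> * complex_of_real x - complex_of_real (x\<^sup>2 / 2))" for x
  have v: "0 \<le> v" "v \<le> 1" using p by (auto simp: v_def mult_le_one)
  have "norm (complex_of_real (1 - p) * R (- s * p) + complex_of_real p * R (s * (1 - p)))
          \<le> (1 - p) * norm (R (- s * p)) + p * norm (R (s * (1 - p)))"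
    using p norm_of_real[where 'a = complex, of "1 - p"]
    by (intro norm_triangle_le add_mono) (simp_all add: norm_mult)
  also have "\<dots> \<le> (1 - p) * (\<bar>s\<bar> ^ 3 * p ^ 3 / 6) + p * (\<bar>s\<bar> ^ 3 * (1 - p) ^ 3 / 6)"
    using p norm_iexp_minus_taylor2_le[of "- s * p"] norm_iexp_minus_taylor2_le[of "s * (1 - p)"]
    by (intro add_mono mult_left_mono) (simp_all add: R_def abs_mult power_mult_distrib)
  also have "\<dots> = \<bar>s\<bar> ^ 3 / 6 * (v * (1 - 2 * v))"
  proof -
    have "(1 - p) * (a * p ^ 3 / 6) + p * (a * (1 - p) ^ 3 / 6) = a / 6 * (v * (1 - 2 * v))" for a
      unfolding v_def by (simp add: field_simps power3_eq_cube)
    then show ?thesis .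
  qed
  also have "\<dots> \<le> \<bar>s\<bar> ^ 3 / 6 * v"
    using v by (intro mult_left_mono) (auto simp: mult_left_le)
  finally have third_order:
    "norm (complex_of_real (1 - p) * R (- s * p) + complex_of_real p * R (s * (1 - p))) \<le> \<bar>s\<bar> ^ 3 * v / 6"
    by simp
  have "\<bar>exp (- (s\<^sup>2 * v / 2)) - (1 - s\<^sup>2 * v / 2)\<bar> \<le> (s\<^sup>2 * v / 2)\<^sup>2"
    using v by (intro abs_exp_neg_minus_linear_le) simp
  also have "\<dots> = s ^ 4 * v\<^sup>2 / 4"
    by (simp add: power_divide power_mult_distrib flip: power_mult)
  also have "\<dots> \<le> s ^ 4 * v / 4"
    using v by (intro divide_right_mono mult_left_mono) (auto simp: power2_eq_square mult_left_le)
  finally have second_order: "\<bar>(1 - s\<^sup>2 * v / 2) - exp (- (s\<^sup>2 * v) / 2)\<bar> \<le> s ^ 4 * v / 4"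
    by (simp add: abs_minus_commute)
  have "centred_bernoulli_char p s - complex_of_real (exp (- (s\<^sup>2 * v) / 2))
          = (complex_of_real (1 - p) * R (- s * p) + complex_of_real p * R (s * (1 - p)))
            + complex_of_real ((1 - s\<^sup>2 * v / 2) - exp (- (s\<^sup>2 * v) / 2))"
    unfolding centred_bernoulli_char_taylor R_def v_def by simp
  also have "norm \<dots> \<le> \<bar>s\<bar> ^ 3 * v / 6 + s ^ 4 * v / 4"
    by (rule norm_triangle_le, rule add_mono) (use third_order second_order in \<open>simp_all only: norm_of_real\<close>)
  finally show ?thesis by (simp add: algebra_simps)
qed

lemma norm_prod_centred_bernoulli_char_minus_gaussian_le:
  fixes n :: nat
  assumes p: "\<And>j. 0 \<le> p j" "\<And>j. p j \<le> 1"
  defines "v \<equiv> \<Sum>j<n. p j * (1 - p j)"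
  assumes v: "v > 0"
  shows "norm ((\<Prod>j<n. centred_bernoulli_char (p j) (t / sqrt v)) - complex_of_real (exp (- t\<^sup>2 / 2)))
           \<le> \<bar>t\<bar> ^ 3 / (6 * sqrt v) + t ^ 4 / (4 * v)"
proof -
  define s where "s = t / sqrt v"
  define g where "g j = complex_of_real (exp (- (s\<^sup>2 * (p j * (1 - p j))) / 2))" for j
  have "s\<^sup>2 * v = t\<^sup>2" using v by (simp add: s_def power_divide)
  then have sum: "(\<Sum>j<n. - (s\<^sup>2 * (p j * (1 - p j))) / 2) = - t\<^sup>2 / 2"
    by (simp add: v_def sum_distrib_left sum_divide_distrib[symmetric] sum_negf)
  have "(\<Prod>j<n. g j) = complex_of_real (\<Prod>j<n. exp (- (s\<^sup>2 * (p j * (1 - p j))) / 2))"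
    by (simp add: g_def)
  also have "\<dots> = complex_of_real (exp (\<Sum>j<n. - (s\<^sup>2 * (p j * (1 - p j))) / 2))"
    by (simp add: exp_sum)
  also have "\<dots> = complex_of_real (exp (- t\<^sup>2 / 2))"
    by (simp only: sum)
  finally have prod_g: "(\<Prod>j<n. g j) = complex_of_real (exp (- t\<^sup>2 / 2))" .
  have "norm ((\<Prod>j<n. centred_bernoulli_char (p j) s) - complex_of_real (exp (- t\<^sup>2 / 2)))
               \<le> (\<Sum>j<n. norm (centred_bernoulli_char (p j) s - g j))"
    unfolding prod_g[symmetric] using p
    by (intro norm_prod_diff_le_sum_norm_diff) (auto simp: norm_centred_bernoulli_char_le g_def)
  also have "\<dots> \<le> (\<Sum>j<n. p j * (1 - p j) * (\<bar>s\<bar> ^ 3 / 6 + s ^ 4 / 4))"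
    unfolding g_def using p by (intro sum_mono norm_centred_bernoulli_char_minus_gaussian_le)
  also have "\<dots> = v * (\<bar>s\<bar> ^ 3 / 6 + s ^ 4 / 4)" by (simp add: v_def sum_distrib_right)
  also have "\<dots> = \<bar>t\<bar> ^ 3 / (6 * sqrt v) + t ^ 4 / (4 * v)"
    using v by (simp add: s_def abs_divide power_divide field_simps eval_nat_numeral)
  finally show ?thesis by (simp add: s_def)
qed

lemma prod_centred_bernoulli_char_tendsto_gaussian:
  assumes p: "\<And>j. 0 \<le> p j" "\<And>j. p j \<le> 1"
    and v: "filterlim (\<lambda>n. \<Sum>j<n. p j * (1 - p j)) at_top sequentially"
  shows "(\<lambda>n. \<Prod>j<n. centred_bernoulli_char (p j) (t / sqrt (\<Sum>j<n. p j * (1 - p j))))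
           \<longlonglongrightarrow> complex_of_real (exp (- t\<^sup>2 / 2))"
proof -
  let ?v = "\<lambda>n. \<Sum>j<n. p j * (1 - p j)"
  have sqrt_v: "filterlim (\<lambda>n. sqrt (?v n)) at_top sequentially"
    by (rule filterlim_compose[OF sqrt_at_top v])
  have "filterlim (\<lambda>n. 6 * sqrt (?v n)) at_infinity sequentially"
    by (rule filterlim_at_top_imp_at_infinity, rule filterlim_tendsto_pos_mult_at_top[OF tendsto_const _ sqrt_v])
       simp
  moreover have "filterlim (\<lambda>n. 4 * ?v n) at_infinity sequentially"
    by (rule filterlim_at_top_imp_at_infinity, rule filterlim_tendsto_pos_mult_at_top[OF tendsto_const _ v])
       simp
  ultimately have bound: "(\<lambda>n. \<bar>t\<bar> ^ 3 / (6 * sqrt (?v n)) + t ^ 4 / (4 * ?v n)) \<longlonglongrightarrow> 0"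
    by (intro tendsto_add_zero tendsto_divide_0[OF tendsto_const])
  have "\<forall>\<^sub>F n in sequentially. 0 < ?v n" using v unfolding filterlim_at_top_dense by blast
  then have "\<forall>\<^sub>F n in sequentially.
      norm ((\<Prod>j<n. centred_bernoulli_char (p j) (t / sqrt (?v n))) - complex_of_real (exp (- t\<^sup>2 / 2)))
        \<le> \<bar>t\<bar> ^ 3 / (6 * sqrt (?v n)) + t ^ 4 / (4 * ?v n)"
    by eventually_elim (rule norm_prod_centred_bernoulli_char_minus_gaussian_le[OF p])
  then have "(\<lambda>n. (\<Prod>j<n. centred_bernoulli_char (p j) (t / sqrt (?v n)))
                  - complex_of_real (exp (- t\<^sup>2 / 2))) \<longlonglongrightarrow> 0"
    by (rule Lim_null_comparison[OF _ bound])
  then show ?thesis by (rule LIM_zero_cancel)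
qed

section \<open>Asymptotics of mean and variance\<close>

lemma harm_minus_ln_bound:
  assumes "n \<ge> 1"
  shows "\<bar>harm n - ln (real n) - euler_mascheroni\<bar> \<le> 1 / real n"
proof -
  obtain m where n: "n = Suc m" using assms by (cases n) auto
  have lower: "euler_mascheroni \<ge> harm n - ln (real n + 1) + 1 / (2 * (real n + 1))"
    using euler_mascheroni_lower[of m] by (simp add: n add_ac)
  have upper: "euler_mascheroni \<le> harm n - ln (real n + 1) + 1 / (2 * real n)"
    using euler_mascheroni_upper[of m] by (simp add: n add_ac)
  have n1: "real n \<ge> 1" using assms by simp
  then have "ln (real n + 1) - ln (real n) < 1 / real n" by (rule ln_diff_le_inverse)
  moreover have "ln (real n) \<le> ln (real n + 1)" "1 / (2 * real n) \<le> 1 / real n"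
    using n1 by (simp_all add: field_simps)
  moreover have "1 / (2 * (real n + 1)) \<ge> 0" by simp
  ultimately show ?thesis using lower upper unfolding abs_le_iff by linarith
qed

lemma sum_inv_odd_eq_harm: "(\<Sum>j<n. inv_odd j) = harm (2*n) - harm n / 2"
proof (induction n)
  case (Suc n)
  have "(\<Sum>j<Suc n. inv_odd j) = harm (2*n) - harm n / 2 + 1 / (2 * real n + 1)"
    using Suc.IH by (simp add: inv_odd_def)
  also have "\<dots> = harm (2 * Suc n) - harm (Suc n) / 2"
  proof -
    have h2n: "harm (2 * Suc n) = harm (2*n) + 1 / (2 * real n + 1) + 1 / (2 * real n + 2)"
      by (simp add: harm_Suc inverse_eq_divide add_ac)
    have hn: "harm (Suc n) = harm n + 1 / (real n + 1)"
      by (simp add: harm_Suc inverse_eq_divide add_ac)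
    have half: "1 / (2 * real n + 2) = 1 / (real n + 1) / 2" by (simp add: field_simps)
    show ?thesis unfolding h2n hn half by (simp add: diff_divide_distrib add_divide_distrib)
  qed
  finally show ?case .
qed (simp add: harm_altdef)

lemma sum_inv_odd_asymptotics:
  assumes "n \<ge> 1"
  shows "\<bar>(\<Sum>j<n. inv_odd j) - (ln (real n) / 2 + (euler_mascheroni / 2 + ln 2))\<bar> \<le> 1 / real n"
proof -
  have "\<bar>harm n - ln (real n) - euler_mascheroni\<bar> \<le> 1 / real n"
    by (rule harm_minus_ln_bound[OF assms])
  moreover have "\<bar>harm (2*n) - ln (real (2*n)) - euler_mascheroni\<bar> \<le> 1 / real (2*n)"
    by (rule harm_minus_ln_bound) (use assms in simp)
  moreover have "ln (real (2*n)) = ln 2 + ln (real n)" using assms by (simp add: ln_mult)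
  ultimately show ?thesis unfolding sum_inv_odd_eq_harm abs_le_iff by (simp add: field_simps)
qed

lemma inv_odd_square_sums: "(\<lambda>j. (inv_odd j)\<^sup>2) sums (pi\<^sup>2 / 8)"
proof -
  define S where "S N = (\<Sum>k<N. 1 / (real k + 1)\<^sup>2)" for N
  have S: "S \<longlonglongrightarrow> pi\<^sup>2 / 6"
    using inverse_squares_sums unfolding sums_def S_def by (simp add: add.commute)
  have split: "S (2*n) = (\<Sum>j<n. (inv_odd j)\<^sup>2) + S n / 4" for n
  proof (induction n)
    case (Suc n)
    have "1 / (2 * real n + 2)\<^sup>2 = (1 / (real n + 1)\<^sup>2) / 4" by (simp add: power2_eq_square field_simps)
    then show ?case using Suc.IH by (simp add: S_def inv_odd_def power_divide add_ac)
  qed (simp add: S_def)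
  have "(\<lambda>n. S (2*n)) \<longlonglongrightarrow> pi\<^sup>2 / 6"
    using LIMSEQ_subseq_LIMSEQ[OF S, of "\<lambda>n. 2*n"] by (simp add: strict_mono_def comp_def)
  then have "(\<lambda>n. S (2*n) - S n / 4) \<longlonglongrightarrow> pi\<^sup>2 / 6 - (pi\<^sup>2 / 6) / 4"
    by (intro tendsto_diff tendsto_divide S tendsto_const) simp_all
  then show ?thesis by (simp add: sums_def split)
qed

lemma inv_odd_square_le:
  assumes "m \<ge> 1"
  shows "(inv_odd m)\<^sup>2 \<le> 1 / (4 * real m) - 1 / (4 * real (Suc m))"
proof -
  have m: "real m > 0" using assms by simp
  have "(inv_odd m)\<^sup>2 = 1 / (2 * real m + 1)\<^sup>2" by (simp add: inv_odd_def power_divide)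
  also have "\<dots> \<le> 1 / (4 * real m * (real m + 1))"
  proof (rule divide_left_mono)
    show "4 * real m * (real m + 1) \<le> (2 * real m + 1)\<^sup>2" by (simp add: power2_eq_square algebra_simps)
    show "0 < (2 * real m + 1)\<^sup>2 * (4 * real m * (real m + 1))" using m by (intro mult_pos_pos) auto
  qed simp
  also have "\<dots> = 1 / (4 * real m) - 1 / (4 * real (Suc m))"
    using m by (simp add: field_simps)
  finally show ?thesis .
qed

lemma sum_inv_odd_square_tail_bounds:
  assumes "n \<ge> 1"
  shows "0 \<le> pi\<^sup>2 / 8 - (\<Sum>j<n. (inv_odd j)\<^sup>2)"
    and "pi\<^sup>2 / 8 - (\<Sum>j<n. (inv_odd j)\<^sup>2) \<le> 1 / (4 * real n)"
proof -
  define f where "f j = 1 / (4 * real (j + n))" for j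
  have summable: "summable (\<lambda>j. (inv_odd j)\<^sup>2)" using inv_odd_square_sums by (rule sums_summable)
  then have tail: "pi\<^sup>2 / 8 - (\<Sum>j<n. (inv_odd j)\<^sup>2) = (\<Sum>j. (inv_odd (j + n))\<^sup>2)"
    using suminf_split_initial_segment[OF summable, of n] sums_unique[OF inv_odd_square_sums] by linarith
  then show "0 \<le> pi\<^sup>2 / 8 - (\<Sum>j<n. (inv_odd j)\<^sup>2)"
    using summable_ignore_initial_segment[OF summable] by (simp add: suminf_nonneg)
  have "f \<longlonglongrightarrow> 0"
    unfolding f_def using tendsto_divide_zero[OF LIMSEQ_ignore_initial_segment[OF lim_inverse_n', of n], of 4]
    by (simp add: mult.commute)
  then have telescope: "(\<lambda>j. f j - f (Suc j)) sums f 0"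
    using telescope_sums'[of f 0] by simp
  have "(\<Sum>j. (inv_odd (j + n))\<^sup>2) \<le> (\<Sum>j. f j - f (Suc j))"
  proof (rule suminf_le)
    show "(inv_odd (j + n))\<^sup>2 \<le> f j - f (Suc j)" for j
      using inv_odd_square_le[of "j + n"] assms by (simp add: f_def)
  qed (use summable_ignore_initial_segment[OF summable] telescope in \<open>auto intro: sums_summable\<close>)
  then show "pi\<^sup>2 / 8 - (\<Sum>j<n. (inv_odd j)\<^sup>2) \<le> 1 / (4 * real n)"
    using tail sums_unique[OF telescope] by (simp add: f_def)
qed

lemma sum_inv_odd_variance_eq:
  "(\<Sum>j<n. inv_odd j * (1 - inv_odd j)) = (\<Sum>j<n. inv_odd j) - (\<Sum>j<n. (inv_odd j)\<^sup>2)"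
  by (simp add: sum_subtractf[symmetric] power2_eq_square algebra_simps)

lemma sum_inv_odd_variance_asymptotics:
  assumes "n \<ge> 1"
  shows "\<bar>(\<Sum>j<n. inv_odd j * (1 - inv_odd j))
            - (ln (real n) / 2 + (euler_mascheroni / 2 + ln 2 - pi\<^sup>2 / 8))\<bar>
           \<le> 2 / real n"
proof -
  have "1 / (4 * real n) \<le> 1 / real n" using assms by (simp add: field_simps)
  then show ?thesis
    using sum_inv_odd_asymptotics[OF assms] sum_inv_odd_square_tail_bounds[OF assms]
    unfolding sum_inv_odd_variance_eq abs_le_iff by (simp add: field_simps)
qed

lemma sum_inv_odd_variance_at_top: "filterlim (\<lambda>n. \<Sum>j<n. inv_odd j * (1 - inv_odd j)) at_top sequentially"
proof (rule filterlim_at_top_mono)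
  show "filterlim (\<lambda>n. - pi\<^sup>2 / 8 + 1 / 2 * harm n) at_top sequentially"
    by (intro filterlim_tendsto_add_at_top[OF tendsto_const]
              filterlim_tendsto_pos_mult_at_top[OF tendsto_const _ harm_at_top]) simp
  show "\<forall>\<^sub>F n in sequentially. - pi\<^sup>2 / 8 + 1 / 2 * harm n \<le> (\<Sum>j<n. inv_odd j * (1 - inv_odd j))"
    using eventually_ge_at_top[of 1]
  proof eventually_elim
    case (elim n)
    have "harm n \<le> (harm (2*n) :: real)" by (rule harm_mono) simp
    then show ?case
      using sum_inv_odd_square_tail_bounds(1)[OF elim]
      unfolding sum_inv_odd_variance_eq sum_inv_odd_eq_harm by simp
  qed
qed

section \<open>Asymptotic normality\<close>

lemma char_standardized_C_dist:
  "char (distr (measure_pmf (C_dist n)) borel (\<lambda>x. (x - C_mean n) / sqrt (C_var n))) t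
     = (\<Prod>j<n. centred_bernoulli_char (inv_odd j) (t / sqrt (C_var n)))"
proof -
  define s where "s = t / sqrt (C_var n)"
  have "char (distr (measure_pmf (C_dist n)) borel (\<lambda>x. (x - C_mean n) / sqrt (C_var n))) t
          = pb_expectation inv_odd n (\<lambda>k. iexp (- s * C_mean n) * iexp (s * real k))"
    by (simp add: char_def integral_distr integral_C_dist s_def exp_add[symmetric] algebra_simps
                  diff_divide_distrib)
  also have "\<dots> = iexp (- s * C_mean n) * (\<Prod>j<n. 1 - complex_of_real (inv_odd j)
                                                    + complex_of_real (inv_odd j) * iexp s)"
    by (simp only: pb_expectation_mult_left pb_expectation_iexp)
  also have "iexp (- s * C_mean n) = (\<Prod>j<n. iexp (- s * inv_odd j))"
    by (simp add: C_mean_eq sum_distrib_left exp_sum[symmetric])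
  finally show ?thesis
    by (simp add: centred_bernoulli_char_def s_def prod.distrib mult.commute)
qed

lemma standardized_C_dist_weak_conv:
  "weak_conv_m (\<lambda>n. distr (measure_pmf (C_dist n)) borel (\<lambda>x. (x - C_mean n) / sqrt (C_var n)))
     std_normal_distribution"
proof (rule levy_continuity)
  fix n
  show "real_distribution (distr (measure_pmf (C_dist n)) borel (\<lambda>x. (x - C_mean n) / sqrt (C_var n)))"
    by (rule prob_space.real_distribution_distr[OF prob_space_measure_pmf]) simp
next
  show "real_distribution std_normal_distribution" by (rule real_dist_normal_dist)
next
  have p: "0 \<le> inv_odd j" "inv_odd j \<le> 1" for j by (auto simp: inv_odd_def)
  fix t
  show "(\<lambda>n. char (distr (measure_pmf (C_dist n)) borel (\<lambda>x. (x - C_mean n) / sqrt (C_var n))) t)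
          \<longlonglongrightarrow> char std_normal_distribution t"
    unfolding char_standardized_C_dist char_std_normal_distribution unfolding C_var_eq
    using prod_centred_bernoulli_char_tendsto_gaussian[OF p sum_inv_odd_variance_at_top] by simp
qed

lemma C_mean_asymptotics:
  "(\<lambda>n. C_mean n - (ln (real n) / 2 + (euler_mascheroni / 2 + ln 2))) \<in> O(\<lambda>n. 1 / real n)"
proof (rule bigoI[where c = 1])
  show "\<forall>\<^sub>F n in at_top. norm (C_mean n - (ln (real n) / 2 + (euler_mascheroni / 2 + ln 2)))
                          \<le> 1 * norm (1 / real n)"
    using eventually_ge_at_top[of 1] by eventually_elim (simp add: C_mean_eq sum_inv_odd_asymptotics)
qed

lemma C_var_asymptotics:
  "(\<lambda>n. C_var n - (ln (real n) / 2 + (euler_mascheroni / 2 + ln 2 - pi\<^sup>2 / 8))) \<in> O(\<lambda>n. 1 / real n)"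
proof (rule bigoI[where c = 2])
  show "\<forall>\<^sub>F n in at_top. norm (C_var n - (ln (real n) / 2 + (euler_mascheroni / 2 + ln 2 - pi\<^sup>2 / 8)))
                          \<le> 2 * norm (1 / real n)"
    using eventually_ge_at_top[of 1]
    by eventually_elim (use sum_inv_odd_variance_asymptotics in \<open>simp add: C_var_eq\<close>)
qed

theorem theorem3p8:
  shows "weak_conv_m
           (\<lambda>n. distr (measure_pmf (C_dist n)) borel (\<lambda>x. (x - C_mean n) / sqrt (C_var n)))
           std_normal_distribution
       \<and> (\<lambda>n. C_mean n - (ln (real n) / 2 + (euler_mascheroni / 2 + ln 2)))
           \<in> O(\<lambda>n. 1 / real n)
       \<and> (\<lambda>n. C_var n - (ln (real n) / 2 + (euler_mascheroni / 2 + ln 2 - pi\<^sup>2 / 8)))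
           \<in> O(\<lambda>n. 1 / real n)"
  using standardized_C_dist_weak_conv C_mean_asymptotics C_var_asymptotics by blast

end
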